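(* Let $(T,(V_t)_{t\in T})$ be a lean tree-decomposition of a graph $H$ into finite parts, and root $T$ at an arbitrary node $r$. Then every rooted ray in $T$ arises from at most one end of $H$. Moreover, if a rooted ray $R$ in $T$ arises from an end $\varepsilon$ of $H$, then $\liminf_{e\in E(R)}V_e=\mathrm{Dom}(\varepsilon)$.
   Context: A tree-decomposition $(T,(V_t)_{t\in T})$ of $H$ consists of a tree $T$ and bags $V_t\subseteq V(H)$ covering all vertices and edges of $H$ such that for each vertex $v$ the nodes $t$ with $v\in V_t$ form a subtree; it is into finite parts if all bags are finite. For an edge $e=st$ of $T$, $V_e:=V_s\cap V_t$. The decomposition is lean if for every two (not necessarily distinct) nodes $s,t$ and all $Z_s\subseteq V_s$, $Z_t\subseteq V_t$ with $|Z_s|=|Z_t|=:\ell\in\mathbb N$, either $H$ contains $\ell$ pairwise disjoint $Z_s$–$Z_t$ paths or some edge $e$ of the $s$–$t$ path in $T$ has $|V_e|<\ell$. With $T$ rooted at $r$, $\le_T$ is the tree-order, a rooted ray is a ray in $T$ starting at $r$, and for an edge $e$, $T_e$ is the component of $T-e$ not containing $r$ and $H\mathring{\uparrow}e$ is the subgraph of $H$ induced on $\bigcup_{u\in T_e}V_u\setminus V_e$. An end of $H$ is an equivalence class of rays, two rays being equivalent if for every finite $X\subseteq V(H)$ they have tails in the same component of $H-X$. If $X\subseteq V(H)$ meets every ray of an end $\varepsilon$ in only finitely many vertices, $C_H(X,\varepsilon)$ denotes the unique component of $H-X$ containing a tail of every ray in $\varepsilon$. An end $\varepsilon$ gives rise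 to (i.e. the ray arises from $\varepsilon$) the rooted ray $R$ in $T$ if every ray in $\varepsilon$ meets every bag $V_t$ with $t\in R$ in only finitely many vertices, and for every edge $e=st$ of $R$ with $s<_T t$ we have $C_H(V_s,\varepsilon)\subseteq H\mathring{\uparrow}e$. A vertex $v$ dominates $\varepsilon$ if $v\in C_H(X,\varepsilon)$ for every finite $X\subseteq V(H)\setminus\{v\}$; $\mathrm{Dom}(\varepsilon)$ is the set of vertices dominating $\varepsilon$. For a ray $R=t_0e_0t_1e_1\dots$ in $T$, $\liminf_{e\in E(R)}V_e:=\bigcup_{n\in\mathbb N}\bigcap_{i\ge n}V_{e_i}$. *)

theory Defs
  imports Main
begin

definition graph :: "'a set \<Rightarrow> ('a \<Rightarrow> 'a \<Rightarrow> bool) \<Rightarrow> bool" where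
  "graph V E \<longleftrightarrow> (\<forall>u v. E u v \<longrightarrow> u \<in> V \<and> v \<in> V \<and> E v u \<and> u \<noteq> v)"

definition gpath :: "'a set \<Rightarrow> ('a \<Rightarrow> 'a \<Rightarrow> bool) \<Rightarrow> 'a list \<Rightarrow> bool" where
  "gpath W E p \<longleftrightarrow> p \<noteq> [] \<and> distinct p \<and> set p \<subseteq> W \<and>
     (\<forall>i. Suc i < length p \<longrightarrow> E (p ! i) (p ! Suc i))"

definition conn :: "'a set \<Rightarrow> ('a \<Rightarrow> 'a \<Rightarrow> bool) \<Rightarrow> 'a \<Rightarrow> 'a \<Rightarrow> bool" where
  "conn W E x y \<longleftrightarrow> (\<exists>p. gpath W E p \<and> hd p = x \<and> last p = y)"

definition ABpath :: "'a set \<Rightarrow> ('a \<Rightarrow> 'a \<Rightarrow> bool) \<Rightarrow> 'a set \<Rightarrow> 'a set \<Rightarrow> 'a list \<Rightarrow> bool" where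
  "ABpath V E A B p \<longleftrightarrow> gpath V E p \<and> set p \<inter> A = {hd p} \<and> set p \<inter> B = {last p}"

definition ray :: "'a set \<Rightarrow> ('a \<Rightarrow> 'a \<Rightarrow> bool) \<Rightarrow> (nat \<Rightarrow> 'a) \<Rightarrow> bool" where
  "ray V E R \<longleftrightarrow> inj R \<and> (\<forall>n. R n \<in> V) \<and> (\<forall>n. E (R n) (R (Suc n)))"

definition ray_equiv :: "'a set \<Rightarrow> ('a \<Rightarrow> 'a \<Rightarrow> bool) \<Rightarrow> (nat \<Rightarrow> 'a) \<Rightarrow> (nat \<Rightarrow> 'a) \<Rightarrow> bool" where
  "ray_equiv V E R S \<longleftrightarrow> (\<forall>X. finite X \<and> X \<subseteq> V \<longrightarrow>
     (\<exists>n m. (\<forall>k\<ge>n. R k \<notin> X) \<and> (\<forall>k\<ge>m. S k \<notin> X) \<and> conn (V - X) E (R n) (S m)))"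

definition is_end :: "'a set \<Rightarrow> ('a \<Rightarrow> 'a \<Rightarrow> bool) \<Rightarrow> (nat \<Rightarrow> 'a) set \<Rightarrow> bool" where
  "is_end V E \<epsilon> \<longleftrightarrow> (\<exists>R. ray V E R \<and> \<epsilon> = {S. ray V E S \<and> ray_equiv V E R S})"

text \<open>C_H(X,eps): (vertex set of) the component of H - X containing a tail of every ray of eps.\<close>
definition endcomp :: "'a set \<Rightarrow> ('a \<Rightarrow> 'a \<Rightarrow> bool) \<Rightarrow> 'a set \<Rightarrow> (nat \<Rightarrow> 'a) set \<Rightarrow> 'a set" where
  "endcomp V E X \<epsilon> = {y \<in> V - X. \<forall>R\<in>\<epsilon>. \<exists>n. (\<forall>k\<ge>n. R k \<notin> X) \<and> conn (V - X) E (R n) y}"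

definition Dom :: "'a set \<Rightarrow> ('a \<Rightarrow> 'a \<Rightarrow> bool) \<Rightarrow> (nat \<Rightarrow> 'a) set \<Rightarrow> 'a set" where
  "Dom V E \<epsilon> = {v. \<forall>X. finite X \<and> X \<subseteq> V - {v} \<longrightarrow> v \<in> endcomp V E X \<epsilon>}"

definition tree :: "'b set \<Rightarrow> ('b \<Rightarrow> 'b \<Rightarrow> bool) \<Rightarrow> bool" where
  "tree N A \<longleftrightarrow> graph N A \<and> (\<forall>s\<in>N. \<forall>t\<in>N. \<exists>!p. gpath N A p \<and> hd p = s \<and> last p = t)"

definition tpath :: "'b set \<Rightarrow> ('b \<Rightarrow> 'b \<Rightarrow> bool) \<Rightarrow> 'b \<Rightarrow> 'b \<Rightarrow> 'b list \<Rightarrow> bool" where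
  "tpath N A s t p \<longleftrightarrow> gpath N A p \<and> hd p = s \<and> last p = t"

definition tree_decomp :: "'a set \<Rightarrow> ('a \<Rightarrow> 'a \<Rightarrow> bool) \<Rightarrow> 'b set \<Rightarrow> ('b \<Rightarrow> 'b \<Rightarrow> bool)
    \<Rightarrow> ('b \<Rightarrow> 'a set) \<Rightarrow> bool" where
  "tree_decomp V E N A B \<longleftrightarrow> tree N A \<and>
     (\<Union>t\<in>N. B t) = V \<and>
     (\<forall>u v. E u v \<longrightarrow> (\<exists>t\<in>N. u \<in> B t \<and> v \<in> B t)) \<and>
     (\<forall>v s t p. s \<in> N \<and> t \<in> N \<and> v \<in> B s \<and> v \<in> B t \<and> tpath N A s t p \<longrightarrow> (\<forall>u\<in>set p. v \<in> B u))"

definition finite_parts :: "'b set \<Rightarrow> ('b \<Rightarrow> 'a set) \<Rightarrow> bool" where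
  "finite_parts N B \<longleftrightarrow> (\<forall>t\<in>N. finite (B t))"

definition lean :: "'a set \<Rightarrow> ('a \<Rightarrow> 'a \<Rightarrow> bool) \<Rightarrow> 'b set \<Rightarrow> ('b \<Rightarrow> 'b \<Rightarrow> bool)
    \<Rightarrow> ('b \<Rightarrow> 'a set) \<Rightarrow> bool" where
  "lean V E N A B \<longleftrightarrow> (\<forall>s\<in>N. \<forall>t\<in>N. \<forall>Zs Zt. Zs \<subseteq> B s \<and> Zt \<subseteq> B t \<and> finite Zs \<and> finite Zt
      \<and> card Zs = card Zt \<longrightarrow>
      (\<exists>P. card P = card Zs \<and> (\<forall>p\<in>P. ABpath V E Zs Zt p) \<and>
            (\<forall>p\<in>P. \<forall>q\<in>P. p \<noteq> q \<longrightarrow> set p \<inter> set q = {}))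
      \<or> (\<exists>p. tpath N A s t p \<and> (\<exists>i. Suc i < length p \<and> card (B (p ! i) \<inter> B (p ! Suc i)) < card Zs)))"

definition tle :: "'b set \<Rightarrow> ('b \<Rightarrow> 'b \<Rightarrow> bool) \<Rightarrow> 'b \<Rightarrow> 'b \<Rightarrow> 'b \<Rightarrow> bool" where
  "tle N A r s t \<longleftrightarrow> (\<exists>p. tpath N A r t p \<and> s \<in> set p)"

definition tlt :: "'b set \<Rightarrow> ('b \<Rightarrow> 'b \<Rightarrow> bool) \<Rightarrow> 'b \<Rightarrow> 'b \<Rightarrow> 'b \<Rightarrow> bool" where
  "tlt N A r s t \<longleftrightarrow> tle N A r s t \<and> s \<noteq> t"

definition rooted_ray :: "'b set \<Rightarrow> ('b \<Rightarrow> 'b \<Rightarrow> bool) \<Rightarrow> 'b \<Rightarrow> (nat \<Rightarrow> 'b) \<Rightarrow> bool" where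
  "rooted_ray N A r R \<longleftrightarrow> ray N A R \<and> R 0 = r"

text \<open>T_e for the edge e = st: the component of T - e not containing r.\<close>
definition Tcomp :: "'b set \<Rightarrow> ('b \<Rightarrow> 'b \<Rightarrow> bool) \<Rightarrow> 'b \<Rightarrow> 'b \<Rightarrow> 'b \<Rightarrow> 'b set" where
  "Tcomp N A r s t = {u \<in> N. \<not> conn N (\<lambda>x y. A x y \<and> {x, y} \<noteq> {s, t}) u r}"

definition up :: "'b set \<Rightarrow> ('b \<Rightarrow> 'b \<Rightarrow> bool) \<Rightarrow> ('b \<Rightarrow> 'a set) \<Rightarrow> 'b \<Rightarrow> 'b \<Rightarrow> 'b \<Rightarrow> 'a set" where
  "up N A B r s t = (\<Union>u\<in>Tcomp N A r s t. B u) - (B s \<inter> B t)"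

definition arises_from :: "'a set \<Rightarrow> ('a \<Rightarrow> 'a \<Rightarrow> bool) \<Rightarrow> 'b set \<Rightarrow> ('b \<Rightarrow> 'b \<Rightarrow> bool)
    \<Rightarrow> ('b \<Rightarrow> 'a set) \<Rightarrow> 'b \<Rightarrow> (nat \<Rightarrow> 'a) set \<Rightarrow> (nat \<Rightarrow> 'b) \<Rightarrow> bool" where
  "arises_from V E N A B r \<epsilon> R \<longleftrightarrow>
     (\<forall>S\<in>\<epsilon>. \<forall>n. finite {k. S k \<in> B (R n)}) \<and>
     (\<forall>n. tlt N A r (R n) (R (Suc n)) \<longrightarrow> endcomp V E (B (R n)) \<epsilon> \<subseteq> up N A B r (R n) (R (Suc n)))"

definition liminf_sep :: "('b \<Rightarrow> 'a set) \<Rightarrow> (nat \<Rightarrow> 'b) \<Rightarrow> 'a set" where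
  "liminf_sep B R = (\<Union>n. \<Inter>i\<in>{n..}. B (R i) \<inter> B (R (Suc i)))"

end

(*
  Write t_0 t_1 ... for the rooted ray, e_k = t_k t_(k+1), and U_k for the vertex set of
  H up-arrow e_k. Every vertex eventually lies outside U_k, whereas every ray of an end
  arising from the ray has a tail in each U_k; so for all large k such a ray meets V_(e_k)
  arbitrarily late.

  The core: there is no finite X together with a union K of components of H - X such that
  for all large k the adhesion set V_(e_k) meets both K and H - X - K. Otherwise pick i with
  X disjoint from U_i, every vertex of X in V_(e_i) staying in all later bags, and |V_(e_i)|
  minimal among later adhesion sets. Arising rays force later bags V_(t_j) larger than
  V_(e_i). For Z in V_(t_j) with |Z| = |V_(e_i)| and X-part of V_(e_i) inside Z, leanness
  gives |Z| disjoint V_(e_i)-Z paths, each trivial or running inside U_i and thus avoiding X;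
  so |Z meet K| = |V_(e_i) meet K|, which fails for two such Z differing only in one vertex
  inside and one vertex outside K.

  Taking for K the component of a tail of one arising ray shows that rays of two arising
  ends are equivalent; taking the component of a vertex of the liminf shows that this vertex
  dominates the end. Conversely, a dominating vertex that leaves the bags V_(t_k) lies in
  C(V_(t_k), eps), which is contained in U_k; but it eventually avoids U_k.
*)

theory Submission
  imports Defs
begin

definition adj_rel :: "'a set \<Rightarrow> ('a \<Rightarrow> 'a \<Rightarrow> bool) \<Rightarrow> ('a \<times> 'a) set" where
  "adj_rel W E = {(a, b). a \<in> W \<and> b \<in> W \<and> E a b}"

lemma gpath_iff_successively:
  "gpath W E p \<longleftrightarrow> p \<noteq> [] \<and> distinct p \<and> set p \<subseteq> W \<and> successively E p"
  unfolding gpath_def successively_conv_nth by simp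

lemma gpath_subset: "gpath W E p \<Longrightarrow> set p \<subseteq> W' \<Longrightarrow> gpath W' E p"
  unfolding gpath_def by blast

lemma gpath_mono: "gpath W E p \<Longrightarrow> (\<And>a b. E a b \<Longrightarrow> E' a b) \<Longrightarrow> gpath W E' p"
  unfolding gpath_def by simp

lemma gpath_drop:
  assumes "gpath W E p" "i < length p"
  shows "gpath W E (drop i p)" "hd (drop i p) = p ! i" "last (drop i p) = last p"
  using assms by (auto simp: gpath_iff_successively successively_conv_nth hd_drop_conv_nth
      dest: in_set_dropD)

lemma gpath_take:
  assumes "gpath W E p" "i < length p"
  shows "gpath W E (take (Suc i) p)" "hd (take (Suc i) p) = hd p" "last (take (Suc i) p) = p ! i"
  using assms by (auto simp: gpath_def last_conv_nth dest: in_set_takeD)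

lemma gpath_snoc:
  assumes "gpath W E p" "z \<notin> set p" "z \<in> W" "E (last p) z"
  shows "gpath W E (p @ [z])"
  using assms by (auto simp: gpath_iff_successively successively_append_iff)

lemma conn_imp_rtrancl:
  assumes "conn W E x y"
  shows "x \<in> W \<and> (x, y) \<in> (adj_rel W E)\<^sup>*"
proof -
  obtain p where p: "gpath W E p" "hd p = x" "last p = y"
    using assms unfolding conn_def by blast
  have reach: "(hd p, p ! i) \<in> (adj_rel W E)\<^sup>*" if "i < length p" for i
    using that
  proof (induction i)
    case 0
    then show ?case by (simp add: hd_conv_nth)
  next
    case (Suc i)
    then have "(p ! i, p ! Suc i) \<in> adj_rel W E"
      using p(1) unfolding gpath_def adj_rel_def by auto
    with Suc show ?case by (meson Suc_lessD rtrancl.rtrancl_into_rtrancl)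
  qed
  have "p \<noteq> []" "set p \<subseteq> W"
    using p(1) unfolding gpath_def by auto
  then have "(hd p, last p) \<in> (adj_rel W E)\<^sup>*" "hd p \<in> W"
    using reach[of "length p - 1"] by (auto simp: last_conv_nth)
  then show ?thesis
    using p(2,3) by simp
qed

lemma rtrancl_imp_conn:
  assumes "(x, y) \<in> (adj_rel W E)\<^sup>*" "x \<in> W"
  shows "conn W E x y"
  using assms(1)
proof (induction rule: rtrancl_induct)
  case base
  have "gpath W E [x]"
    using assms(2) unfolding gpath_def by simp
  then show ?case
    unfolding conn_def by force
next
  case (step y z)
  obtain p where p: "gpath W E p" "hd p = x" "last p = y"
    using step.IH unfolding conn_def by blast
  have z: "z \<in> W" "E y z"
    using step.hyps(2) unfolding adj_rel_def by auto
  show ?case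
  proof (cases "z \<in> set p")
    case True
    then obtain i where "i < length p" "p ! i = z"
      by (auto simp: in_set_conv_nth)
    then show ?thesis
      unfolding conn_def using gpath_take[OF p(1)] p(2) by metis
  next
    case False
    have "p \<noteq> []"
      using p(1) unfolding gpath_def by simp
    then show ?thesis
      unfolding conn_def using gpath_snoc[OF p(1) False z(1)] p z(2) by (metis hd_append2 last_snoc)
  qed
qed

lemma conn_iff_rtrancl: "conn W E x y \<longleftrightarrow> x \<in> W \<and> (x, y) \<in> (adj_rel W E)\<^sup>*"
  using conn_imp_rtrancl rtrancl_imp_conn by metis

lemma conn_refl: "x \<in> W \<Longrightarrow> conn W E x x"
  unfolding conn_iff_rtrancl by simp

lemma conn_trans: "conn W E x y \<Longrightarrow> conn W E y z \<Longrightarrow> conn W E x z"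
  unfolding conn_iff_rtrancl by auto

lemma conn_memD: "conn W E x y \<Longrightarrow> x \<in> W \<and> y \<in> W"
  unfolding conn_def gpath_def by (auto intro: hd_in_set last_in_set)

lemma conn_step: "conn W E x y \<Longrightarrow> z \<in> W \<Longrightarrow> E y z \<Longrightarrow> conn W E x z"
  using conn_memD[of W E x y] unfolding conn_iff_rtrancl adj_rel_def
  by (auto intro: rtrancl_into_rtrancl)

lemma conn_sym:
  assumes "\<And>a b. E a b \<Longrightarrow> E b a" "conn W E x y"
  shows "conn W E y x"
proof -
  have "(adj_rel W E)\<inverse> = adj_rel W E"
    using assms(1) unfolding adj_rel_def by auto
  then show ?thesis
    using assms(2) conn_memD[OF assms(2)] unfolding conn_iff_rtrancl
    by (metis rtrancl_converseI)
qed

lemma gpath_conn: "gpath W E p \<Longrightarrow> conn W E (hd p) (last p)"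
  unfolding conn_def by blast

lemma conn_closed:
  assumes "conn W E x y" "x \<in> K" "\<And>u w. u \<in> K \<Longrightarrow> w \<in> W \<Longrightarrow> E u w \<Longrightarrow> w \<in> K"
  shows "y \<in> K"
proof -
  have "(x, y) \<in> (adj_rel W E)\<^sup>*"
    using assms(1) unfolding conn_iff_rtrancl by simp
  then show ?thesis
    using assms(2,3) by induction (auto simp: adj_rel_def)
qed

lemma graph_sym: "graph V E \<Longrightarrow> E a b \<Longrightarrow> E b a"
  unfolding graph_def by blast

lemma graph_conn_sym: "graph V E \<Longrightarrow> conn W E x y \<Longrightarrow> conn W E y x"
  using conn_sym graph_sym by metis

lemma component_subset: "{x. conn W E v x} \<subseteq> W"
  using conn_memD by fast

lemma component_closed:
  "u \<in> {x. conn W E v x} \<Longrightarrow> w \<in> W \<Longrightarrow> E u w \<Longrightarrow> w \<in> {x. conn W E v x}"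
  by (simp add: conn_step)

lemma gpath_conn_last:
  assumes "gpath W E p" "y \<in> set p"
  shows "conn W E y (last p)"
proof -
  obtain m where "m < length p" "y = p ! m"
    using assms(2) by (auto simp: in_set_conv_nth)
  then show ?thesis
    using gpath_drop[OF assms(1)] gpath_conn by metis
qed

lemma linkage_card_Int_eq:
  assumes "finite Zs" "finite Zt" "card Zs = card Zt" "card P = card Zs"
    and paths: "\<forall>p\<in>P. ABpath V E Zs Zt p"
    and disjoint: "\<forall>p\<in>P. \<forall>q\<in>P. p \<noteq> q \<longrightarrow> set p \<inter> set q = {}"
    and ends: "\<And>p. p \<in> P \<Longrightarrow> hd p \<in> K \<longleftrightarrow> last p \<in> K"
  shows "card (Zs \<inter> K) = card (Zt \<inter> K)"
proof -
  have ne: "p \<noteq> []" if "p \<in> P" for p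
    using that paths unfolding ABpath_def gpath_def by blast
  have inj: "inj_on f P" if "\<And>p. p \<in> P \<Longrightarrow> f p \<in> set p" for f :: "'a list \<Rightarrow> 'a"
  proof (rule inj_onI)
    fix p q
    assume pq: "p \<in> P" "q \<in> P" "f p = f q"
    then have "set p \<inter> set q \<noteq> {}"
      using that by (metis disjoint_iff)
    then show "p = q"
      using disjoint pq(1,2) by blast
  qed
  have inj_hd: "inj_on hd P" and inj_last: "inj_on last P"
    using ne by (auto intro!: inj)
  have "hd p \<in> Zs" "last p \<in> Zt" if "p \<in> P" for p
    using paths that unfolding ABpath_def by blast+
  then have "hd ` P \<subseteq> Zs" "last ` P \<subseteq> Zt"
    by auto
  moreover have "card (hd ` P) = card Zs" "card (last ` P) = card Zt"
    using card_image[OF inj_hd] card_image[OF inj_last] assms(3,4) by simp_all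
  ultimately have hd_P: "hd ` P = Zs" and last_P: "last ` P = Zt"
    using card_subset_eq assms(1,2) by metis+
  let ?PK = "{p \<in> P. hd p \<in> K}"
  have "Zs \<inter> K = hd ` ?PK" "Zt \<inter> K = last ` ?PK"
    using hd_P last_P ends by auto
  moreover have "card (hd ` ?PK) = card ?PK" "card (last ` ?PK) = card ?PK"
    by (rule card_image[OF inj_on_subset[OF inj_hd]] card_image[OF inj_on_subset[OF inj_last]], blast)+
  ultimately show ?thesis
    by simp
qed

section \<open>Rays and ends\<close>

lemma ray_eventually_notin:
  assumes "ray V E S" "finite X"
  shows "\<forall>\<^sub>F k in sequentially. S k \<notin> X"
proof -
  have "finite (S -` X)"
    using assms unfolding ray_def by (auto intro: finite_vimageI)
  then have "\<forall>\<^sub>F k in cofinite. S k \<notin> X"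
    by (simp add: eventually_cofinite vimage_def)
  then show ?thesis
    by (simp add: cofinite_eq_sequentially)
qed

lemma ray_conn:
  assumes "graph V E" "ray V E S" "\<forall>k\<ge>n. S k \<notin> X" "n \<le> a" "n \<le> b"
  shows "conn (V - X) E (S a) (S b)"
proof -
  have forward: "conn (V - X) E (S a) (S b)" if "n \<le> a" "a \<le> b" for a b
    using that(2)
  proof (induction b rule: dec_induct)
    case base
    show ?case
      using assms(2,3) that(1) unfolding ray_def by (auto intro: conn_refl)
  next
    case (step b)
    then show ?case
      using assms(2,3) that(1) unfolding ray_def by (auto intro: conn_step)
  qed
  show ?thesis
  proof (cases "a \<le> b")
    case True
    then show ?thesis using forward assms(4) by blast
  next
    case False
    then show ?thesis using forward[of b a] assms(5) graph_conn_sym[OF assms(1)] by simp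
  qed
qed

lemma ray_equiv_refl:
  assumes "ray V E S"
  shows "ray_equiv V E S S"
  unfolding ray_equiv_def
proof (intro allI impI)
  fix X :: "'a set"
  assume "finite X \<and> X \<subseteq> V"
  then obtain n where n: "\<forall>k\<ge>n. S k \<notin> X"
    using ray_eventually_notin[OF assms] unfolding eventually_sequentially by blast
  then have "S n \<in> V - X"
    using assms unfolding ray_def by auto
  then show "\<exists>n m. (\<forall>k\<ge>n. S k \<notin> X) \<and> (\<forall>k\<ge>m. S k \<notin> X) \<and> conn (V - X) E (S n) (S m)"
    using n conn_refl[of "S n" "V - X" E] by blast
qed

lemma ray_equiv_sym:
  assumes "graph V E" "ray_equiv V E S T"
  shows "ray_equiv V E T S"
  unfolding ray_equiv_def
proof (intro allI impI)
  fix X :: "'a set"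
  assume "finite X \<and> X \<subseteq> V"
  then have "\<exists>n m. (\<forall>k\<ge>n. S k \<notin> X) \<and> (\<forall>k\<ge>m. T k \<notin> X) \<and> conn (V - X) E (S n) (T m)"
    using assms(2) unfolding ray_equiv_def by simp
  then obtain n m where "\<forall>k\<ge>n. S k \<notin> X" "\<forall>k\<ge>m. T k \<notin> X" "conn (V - X) E (S n) (T m)"
    by blast
  moreover from this(3) have "conn (V - X) E (T m) (S n)"
    by (rule graph_conn_sym[OF assms(1)])
  ultimately show "\<exists>m n. (\<forall>k\<ge>m. T k \<notin> X) \<and> (\<forall>k\<ge>n. S k \<notin> X) \<and> conn (V - X) E (T m) (S n)"
    by blast
qed

lemma ray_equiv_trans:
  assumes "graph V E" "ray V E T" "ray_equiv V E S T" "ray_equiv V E T U"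
  shows "ray_equiv V E S U"
  unfolding ray_equiv_def
proof (intro allI impI)
  fix X :: "'a set"
  assume X: "finite X \<and> X \<subseteq> V"
  have "\<exists>n m. (\<forall>k\<ge>n. S k \<notin> X) \<and> (\<forall>k\<ge>m. T k \<notin> X) \<and> conn (V - X) E (S n) (T m)"
    using assms(3) X unfolding ray_equiv_def by simp
  then obtain n1 m1 where 1: "\<forall>k\<ge>n1. S k \<notin> X" "\<forall>k\<ge>m1. T k \<notin> X" "conn (V - X) E (S n1) (T m1)"
    by blast
  have "\<exists>n m. (\<forall>k\<ge>n. T k \<notin> X) \<and> (\<forall>k\<ge>m. U k \<notin> X) \<and> conn (V - X) E (T n) (U m)"
    using assms(4) X unfolding ray_equiv_def by simp
  then obtain n2 m2 where 2: "\<forall>k\<ge>n2. T k \<notin> X" "\<forall>k\<ge>m2. U k \<notin> X" "conn (V - X) E (T n2) (U m2)"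
    by blast
  have "conn (V - X) E (T m1) (T n2)"
    by (rule ray_conn[OF assms(1,2), of "min m1 n2"]) (use 1(2) 2(1) in \<open>auto simp: min_le_iff_disj\<close>)
  then have "conn (V - X) E (S n1) (U m2)"
    using conn_trans[OF conn_trans[OF 1(3)] 2(3)] by blast
  then show "\<exists>n m. (\<forall>k\<ge>n. S k \<notin> X) \<and> (\<forall>k\<ge>m. U k \<notin> X) \<and> conn (V - X) E (S n) (U m)"
    using 1(1) 2(2) by blast
qed

lemma end_eq_class:
  assumes "graph V E" "is_end V E \<epsilon>" "S \<in> \<epsilon>"
  shows "\<epsilon> = {T. ray V E T \<and> ray_equiv V E S T}"
proof -
  obtain R where R: "ray V E R" "\<epsilon> = {T. ray V E T \<and> ray_equiv V E R T}"
    using assms(2) unfolding is_end_def by blast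
  then have S: "ray V E S" "ray_equiv V E R S"
    using assms(3) by auto
  have "ray_equiv V E R T \<longleftrightarrow> ray_equiv V E S T" for T
    using ray_equiv_trans[OF assms(1) R(1) ray_equiv_sym[OF assms(1) S(2)]]
      ray_equiv_trans[OF assms(1) S(1) S(2)] by blast
  then show ?thesis
    using R(2) by simp
qed

lemma end_ray: "is_end V E \<epsilon> \<Longrightarrow> S \<in> \<epsilon> \<Longrightarrow> ray V E S"
  unfolding is_end_def by auto

lemma end_nonempty: "is_end V E \<epsilon> \<Longrightarrow> \<exists>S. S \<in> \<epsilon>"
  unfolding is_end_def using ray_equiv_refl by blast

lemma end_eqI:
  assumes "graph V E" "is_end V E \<epsilon>1" "is_end V E \<epsilon>2" "S1 \<in> \<epsilon>1" "S2 \<in> \<epsilon>2"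
    "ray_equiv V E S1 S2"
  shows "\<epsilon>1 = \<epsilon>2"
proof -
  have "ray V E S1" "ray V E S2"
    using end_ray assms(2-5) by blast+
  then have "ray_equiv V E S1 T \<longleftrightarrow> ray_equiv V E S2 T" for T
    using ray_equiv_trans[OF assms(1) _ ray_equiv_sym[OF assms(1) assms(6)]]
      ray_equiv_trans[OF assms(1) _ assms(6)] by blast
  then show ?thesis
    using end_eq_class[OF assms(1,2,4)] end_eq_class[OF assms(1,3,5)] by simp
qed

lemma ray_tail_in_endcomp:
  assumes "graph V E" "is_end V E \<epsilon>" "S \<in> \<epsilon>" "finite X" "X \<subseteq> V" "\<forall>k\<ge>n. S k \<notin> X"
  shows "S n \<in> endcomp V E X \<epsilon>"
  unfolding endcomp_def
proof (intro CollectI conjI ballI)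
  have S: "ray V E S"
    using end_ray assms(2,3) by blast
  then show "S n \<in> V - X"
    using assms(6) unfolding ray_def by blast
  fix T
  assume "T \<in> \<epsilon>"
  then have "ray_equiv V E T S"
    using end_eq_class[OF assms(1-3)] ray_equiv_sym[OF assms(1)] by blast
  then have "\<exists>m n'. (\<forall>k\<ge>m. T k \<notin> X) \<and> (\<forall>k\<ge>n'. S k \<notin> X) \<and> conn (V - X) E (T m) (S n')"
    using assms(4,5) unfolding ray_equiv_def by simp
  then obtain m n' where mn: "\<forall>k\<ge>m. T k \<notin> X" "\<forall>k\<ge>n'. S k \<notin> X" "conn (V - X) E (T m) (S n')"
    by blast
  have "conn (V - X) E (S n') (S n)"
    by (rule ray_conn[OF assms(1) S, of "min n n'"]) (use assms(6) mn(2) in \<open>auto simp: min_le_iff_disj\<close>)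
  then show "\<exists>m. (\<forall>k\<ge>m. T k \<notin> X) \<and> conn (V - X) E (T m) (S n)"
    using mn(1) conn_trans[OF mn(3)] by blast
qed

lemma ex_crossing_step:
  assumes "n \<le> m" "\<not> P n" "P m"
  shows "\<exists>a\<ge>n. \<not> P a \<and> P (Suc a)"
  using assms
proof (induction m rule: dec_induct)
  case base
  then show ?case by simp
next
  case (step m)
  then show ?case by blast
qed

section \<open>A rooted ray of a tree-decomposition\<close>

locale ray_decomp =
  fixes V :: "'a set" and E :: "'a \<Rightarrow> 'a \<Rightarrow> bool"
    and N :: "'b set" and A :: "'b \<Rightarrow> 'b \<Rightarrow> bool" and B :: "'b \<Rightarrow> 'a set"
    and r :: 'b and R :: "nat \<Rightarrow> 'b"
  assumes graph: "graph V E"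
    and decomp: "tree_decomp V E N A B"
    and rooted: "rooted_ray N A r R"
begin

text \<open>With \<open>e\<^sub>k = R k R (Suc k)\<close>: \<open>adhesion k\<close> is \<open>V\<^sub>e\<^sub>k\<close>, \<open>A_cut k\<close> is the adjacency of
  \<open>T - e\<^sub>k\<close>, \<open>subtree k\<close> is \<open>T\<^sub>e\<^sub>k\<close> and \<open>above k\<close> is the vertex set of \<open>H\<up>e\<^sub>k\<close>.\<close>

definition adhesion :: "nat \<Rightarrow> 'a set" where
  "adhesion k = B (R k) \<inter> B (R (Suc k))"

definition A_cut :: "nat \<Rightarrow> 'b \<Rightarrow> 'b \<Rightarrow> bool" where
  "A_cut k x y \<longleftrightarrow> A x y \<and> {x, y} \<noteq> {R k, R (Suc k)}"

definition subtree :: "nat \<Rightarrow> 'b set" where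
  "subtree k = Tcomp N A r (R k) (R (Suc k))"

definition above :: "nat \<Rightarrow> 'a set" where
  "above k = up N A B r (R k) (R (Suc k))"

lemma tree: "tree N A"
  using decomp unfolding tree_decomp_def by blast

lemma A_sym: "A x y \<Longrightarrow> A y x"
  using tree unfolding tree_def graph_def by blast

lemma tpath_ex: "s \<in> N \<Longrightarrow> t \<in> N \<Longrightarrow> \<exists>p. tpath N A s t p"
  using tree unfolding tree_def tpath_def by blast

lemma tpath_unique: "s \<in> N \<Longrightarrow> t \<in> N \<Longrightarrow> tpath N A s t p \<Longrightarrow> tpath N A s t q \<Longrightarrow> p = q"
  using tree unfolding tree_def tpath_def by blast

lemma bag_subset_V: "t \<in> N \<Longrightarrow> B t \<subseteq> V"
  using decomp unfolding tree_decomp_def by blast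

lemma vertex_in_bag: "v \<in> V \<Longrightarrow> \<exists>t\<in>N. v \<in> B t"
  using decomp unfolding tree_decomp_def by blast

lemma edge_in_bag: "E x y \<Longrightarrow> \<exists>t\<in>N. x \<in> B t \<and> y \<in> B t"
  using decomp unfolding tree_decomp_def by blast

lemma bag_on_tpath:
  "s \<in> N \<Longrightarrow> t \<in> N \<Longrightarrow> v \<in> B s \<Longrightarrow> v \<in> B t \<Longrightarrow> tpath N A s t p \<Longrightarrow> u \<in> set p \<Longrightarrow> v \<in> B u"
  using decomp unfolding tree_decomp_def by blast

lemma ray_R: "ray N A R"
  using rooted unfolding rooted_ray_def by blast

lemma R_0: "R 0 = r"
  using rooted unfolding rooted_ray_def by blast

lemma R_in_N: "R k \<in> N"
  using ray_R unfolding ray_def by blast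

lemma R_adj: "A (R k) (R (Suc k))"
  using ray_R unfolding ray_def by blast

lemma r_in_N: "r \<in> N"
  using R_in_N R_0 by metis

lemma ray_segment_nth: "i + k \<le> j \<Longrightarrow> map R [i..<Suc j] ! k = R (i + k)"
  by (simp del: upt_Suc)

lemma ray_segment_tpath:
  assumes "i \<le> j"
  shows "tpath N A (R i) (R j) (map R [i..<Suc j])"
proof -
  have "distinct (map R [i..<Suc j])"
    using ray_R unfolding ray_def by (simp add: distinct_map inj_on_def del: upt_Suc)
  moreover have "A (map R [i..<Suc j] ! k) (map R [i..<Suc j] ! Suc k)"
    if "Suc k < length (map R [i..<Suc j])" for k
    using that R_adj by (simp del: upt_Suc)
  ultimately show ?thesis
    using assms R_in_N unfolding tpath_def gpath_def
    by (auto simp: hd_map last_map simp del: upt_Suc)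
qed

lemma A_cut_sym: "A_cut k x y \<Longrightarrow> A_cut k y x"
  unfolding A_cut_def using A_sym by (auto simp: insert_commute)

lemma conn_A_cut_sym: "conn W (A_cut k) x y \<Longrightarrow> conn W (A_cut k) y x"
  by (rule conn_sym) (auto intro: A_cut_sym)

lemma subtree_iff: "u \<in> subtree k \<longleftrightarrow> u \<in> N \<and> \<not> conn N (A_cut k) u r"
  unfolding subtree_def Tcomp_def A_cut_def by simp

lemma above_eq: "above k = (\<Union>u\<in>subtree k. B u) - adhesion k"
  unfolding above_def up_def subtree_def adhesion_def by simp

lemma above_subset_V: "above k \<subseteq> V"
  using bag_subset_V by (fastforce simp: above_eq subtree_iff)

lemma tpath_crosses_edge:
  assumes "t \<in> N" "t \<notin> subtree k" "u \<in> subtree k" "tpath N A t u p"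
  shows "R k \<in> set p \<and> R (Suc k) \<in> set p"
proof (rule ccontr)
  assume avoids: "\<not> (R k \<in> set p \<and> R (Suc k) \<in> set p)"
  have "{p ! i, p ! Suc i} \<noteq> {R k, R (Suc k)}" if "Suc i < length p" for i
  proof -
    have "p ! i \<in> set p" "p ! Suc i \<in> set p"
      using that by auto
    then show ?thesis
      using avoids by (auto simp: doubleton_eq_iff)
  qed
  then have "gpath N (A_cut k) p"
    using assms(4) unfolding tpath_def gpath_def A_cut_def by blast
  then have "conn N (A_cut k) t u"
    using assms(4) gpath_conn unfolding tpath_def by metis
  then have "conn N (A_cut k) u t"
    by (rule conn_A_cut_sym)
  moreover have "conn N (A_cut k) t r"
    using assms(1,2) unfolding subtree_iff by blast
  ultimately have "conn N (A_cut k) u r"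
    by (rule conn_trans)
  then show False
    using assms(3) unfolding subtree_iff by blast
qed

lemma eventually_notin_subtree:
  assumes "u \<in> N"
  shows "\<forall>\<^sub>F k in sequentially. u \<notin> subtree k"
proof -
  obtain p where p: "tpath N A r u p"
    using tpath_ex[OF r_in_N assms] by blast
  have "r \<notin> subtree k" for k
    using conn_refl[OF r_in_N] unfolding subtree_iff by blast
  then have avoid: "R k \<notin> set p \<Longrightarrow> u \<notin> subtree k" for k
    using tpath_crosses_edge[OF r_in_N _ _ p] by blast
  have "\<forall>\<^sub>F k in sequentially. R k \<notin> set p"
    by (rule ray_eventually_notin[OF ray_R]) simp
  then show ?thesis
    by (rule eventually_mono) (rule avoid)
qed

lemma ray_in_subtree:
  assumes "i < j"
  shows "R j \<in> subtree i"
proof (rule ccontr)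
  assume "R j \<notin> subtree i"
  then have "conn N (A_cut i) (R j) r"
    using R_in_N unfolding subtree_iff by blast
  then have "conn N (A_cut i) r (R j)"
    by (rule conn_A_cut_sym)
  then obtain q where q: "gpath N (A_cut i) q" "hd q = r" "last q = R j"
    unfolding conn_def by blast
  have "gpath N A q"
    using q(1) by (rule gpath_mono) (simp add: A_cut_def)
  then have "tpath N A (R 0) (R j) q"
    using q(2,3) R_0 unfolding tpath_def by simp
  then have q_eq: "q = map R [0..<Suc j]"
    by (rule tpath_unique[OF R_in_N R_in_N _ ray_segment_tpath]) simp
  then have "Suc i < length q"
    using assms by simp
  then have "A_cut i (q ! i) (q ! Suc i)"
    using q(1) unfolding gpath_def by blast
  moreover have "q ! i = R i" "q ! Suc i = R (Suc i)"
    using q_eq assms ray_segment_nth[of 0 i j] ray_segment_nth[of 0 "Suc i" j] by simp_all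
  ultimately show False
    unfolding A_cut_def by simp
qed

lemma bag_subset_above: "i < j \<Longrightarrow> B (R j) \<subseteq> above i \<union> adhesion i"
  using ray_in_subtree unfolding above_eq by blast

lemma ray_bag_interval:
  assumes "x \<in> B (R i)" "x \<in> B (R j)" "i \<le> k" "k \<le> j"
  shows "x \<in> B (R k)"
proof -
  have "R k \<in> set (map R [i..<Suc j])"
    using assms(3,4) by (simp del: upt_Suc)
  then show ?thesis
    using bag_on_tpath[OF R_in_N R_in_N assms(1,2) ray_segment_tpath] assms(3,4) by simp
qed

lemma above_closed:
  assumes "E y x" "y \<in> above k" "x \<notin> adhesion k"
  shows "x \<in> above k"
proof -
  obtain t where t: "t \<in> N" "x \<in> B t" "y \<in> B t"
    using edge_in_bag[OF assms(1)] by blast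
  obtain u where u: "u \<in> subtree k" "y \<in> B u" "y \<notin> adhesion k"
    using assms(2) unfolding above_eq by blast
  show ?thesis
  proof (cases "t \<in> subtree k")
    case True
    then show ?thesis
      using t(2) assms(3) unfolding above_eq by blast
  next
    case False
    have "u \<in> N"
      using u(1) unfolding subtree_iff by blast
    then obtain p where p: "tpath N A t u p"
      using tpath_ex[OF t(1)] by blast
    then have "y \<in> adhesion k"
      using tpath_crosses_edge[OF t(1) False u(1) p] bag_on_tpath[OF t(1) \<open>u \<in> N\<close> t(3) u(2) p]
      unfolding adhesion_def by blast
    then show ?thesis
      using u(3) by blast
  qed
qed

lemma eventually_bag_persistent:
  "\<forall>\<^sub>F k in sequentially. x \<in> B (R k) \<longrightarrow> (\<forall>j\<ge>k. x \<in> B (R j))"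
proof (cases "finite {k. x \<in> B (R k)}")
  case True
  then have "\<forall>\<^sub>F k in cofinite. x \<notin> B (R k)"
    by (simp add: eventually_cofinite)
  then show ?thesis
    unfolding cofinite_eq_sequentially by (rule eventually_mono) simp
next
  case False
  then have unbounded: "\<exists>j'\<ge>j. x \<in> B (R j')" for j
    using frequently_cofinite[of "\<lambda>k. x \<in> B (R k)"]
    unfolding cofinite_eq_sequentially frequently_sequentially by simp
  have "x \<in> B (R j)" if "x \<in> B (R k)" "k \<le> j" for k j
    using unbounded[of j] ray_bag_interval[OF that(1)] that(2) by blast
  then show ?thesis
    by (simp add: always_eventually)
qed

lemma eventually_bag_below:
  assumes "x \<in> V"
  shows "\<forall>\<^sub>F k in sequentially. \<forall>u\<in>subtree k. x \<in> B u \<longrightarrow> x \<in> B (R k)"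
proof -
  obtain t where t: "t \<in> N" "x \<in> B t"
    using vertex_in_bag[OF assms] by blast
  have below: "x \<in> B (R k)" if "t \<notin> subtree k" "u \<in> subtree k" "x \<in> B u" for k u
  proof -
    have "u \<in> N"
      using that(2) unfolding subtree_iff by blast
    then obtain p where p: "tpath N A t u p"
      using tpath_ex[OF t(1)] by blast
    then have "R k \<in> set p"
      using tpath_crosses_edge[OF t(1) that(1,2)] by blast
    then show ?thesis
      using bag_on_tpath[OF t(1) \<open>u \<in> N\<close> t(2) that(3) p] by blast
  qed
  show ?thesis
    using eventually_notin_subtree[OF t(1)] by (rule eventually_mono) (use below in blast)
qed

lemma eventually_notin_above:
  assumes "x \<in> V"
  shows "\<forall>\<^sub>F k in sequentially. x \<notin> above k"
  using eventually_bag_below[OF assms] eventually_bag_persistent[of x]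
proof eventually_elim
  case (elim k)
  show ?case
  proof
    assume "x \<in> above k"
    then obtain u where "u \<in> subtree k" "x \<in> B u" "x \<notin> adhesion k"
      unfolding above_eq by blast
    with elim show False
      unfolding adhesion_def by (meson IntI le_SucI order_refl)
  qed
qed

lemma ex_min_adhesion:
  assumes "finite X" "X \<subseteq> V" "\<forall>\<^sub>F k in sequentially. \<not> adhesion k \<subseteq> X"
  shows "\<exists>i. X \<inter> above i = {} \<and> (\<forall>k\<ge>i. card (adhesion i) \<le> card (adhesion k))
    \<and> (\<forall>j\<ge>i. X \<inter> adhesion i \<subseteq> B (R j)) \<and> \<not> adhesion i \<subseteq> X"
proof -
  have "\<forall>x\<in>X. \<forall>\<^sub>F k in sequentially. x \<notin> above k \<and> (x \<in> B (R k) \<longrightarrow> (\<forall>j\<ge>k. x \<in> B (R j)))"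
  proof
    fix x
    assume "x \<in> X"
    then show "\<forall>\<^sub>F k in sequentially. x \<notin> above k \<and> (x \<in> B (R k) \<longrightarrow> (\<forall>j\<ge>k. x \<in> B (R j)))"
      using assms(2) by (intro eventually_conj eventually_notin_above eventually_bag_persistent) blast
  qed
  then have "\<forall>\<^sub>F k in sequentially. \<forall>x\<in>X. x \<notin> above k \<and> (x \<in> B (R k) \<longrightarrow> (\<forall>j\<ge>k. x \<in> B (R j)))"
    by (rule eventually_ball_finite[OF assms(1)])
  then have "\<forall>\<^sub>F k in sequentially. X \<inter> above k = {} \<and> (\<forall>j\<ge>k. X \<inter> adhesion k \<subseteq> B (R j))
      \<and> \<not> adhesion k \<subseteq> X"
    using assms(3) by eventually_elim (auto simp: adhesion_def)
  then obtain K where K: "\<And>k. K \<le> k \<Longrightarrow> X \<inter> above k = {} \<and> (\<forall>j\<ge>k. X \<inter> adhesion k \<subseteq> B (R j))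
      \<and> \<not> adhesion k \<subseteq> X"
    unfolding eventually_sequentially by blast
  obtain i where i: "K \<le> i" "\<And>k. K \<le> k \<Longrightarrow> card (adhesion i) \<le> card (adhesion k)"
    using ex_has_least_nat[of "\<lambda>k. K \<le> k" K "\<lambda>k. card (adhesion k)"] by auto
  then show ?thesis
    using K[OF i(1)] by auto
qed

lemma R_tlt: "tlt N A r (R n) (R (Suc n))"
proof -
  have "R n \<in> set (map R [0..<Suc (Suc n)])"
    by (simp del: upt_Suc)
  moreover have "R n \<noteq> R (Suc n)"
    using ray_R unfolding ray_def by (simp add: inj_eq)
  ultimately show ?thesis
    using ray_segment_tpath[of 0 "Suc n"] unfolding tlt_def tle_def R_0 by auto
qed

lemma arises_from_endcomp_above:
  "arises_from V E N A B r \<epsilon> R \<Longrightarrow> endcomp V E (B (R n)) \<epsilon> \<subseteq> above n"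
  using R_tlt unfolding arises_from_def above_def by blast

text \<open>Past its first vertex the path avoids \<open>adhesion i\<close>; it ends in a later bag, hence in
  \<open>above i\<close>, so it never leaves \<open>above i\<close>, which misses \<open>X\<close>.\<close>

lemma adhesion_path_trivial_or_avoids:
  assumes "ABpath V E (adhesion i) Z p" "i < j" "Z \<subseteq> B (R j)"
    "X \<inter> adhesion i \<subseteq> Z" "X \<inter> above i = {}"
  shows "hd p = last p \<or> conn (V - X) E (hd p) (last p)"
proof -
  have p: "gpath V E p" "set p \<inter> adhesion i = {hd p}" "set p \<inter> Z = {last p}"
    using assms(1) by (simp_all only: ABpath_def)
  then obtain x xs where x_xs: "p = x # xs"
    unfolding gpath_def by (cases p) auto
  have x: "x \<in> adhesion i" "x \<in> V" "x \<notin> set xs"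
    using p x_xs unfolding gpath_def by auto
  show ?thesis
  proof (cases "x \<in> X \<or> xs = []")
    case True
    have "x = last p" if "x \<in> X"
    proof -
      have "x \<in> set p \<inter> Z"
        using that x(1) assms(4) x_xs by auto
      then show ?thesis
        using p(3) by blast
    qed
    then show ?thesis
      using True x_xs by auto
  next
    case False
    have xs_sep: "set xs \<inter> adhesion i = {}"
      using p(2) x(3) x_xs by auto
    have "gpath V E xs"
      using gpath_drop(1)[OF p(1), of 1] x_xs False by simp
    moreover have "set xs \<subseteq> V - adhesion i"
      using calculation xs_sep unfolding gpath_def by blast
    ultimately have xs_path: "gpath (V - adhesion i) E xs"
      by (rule gpath_subset)
    have "last xs \<in> Z" "last xs \<in> set xs"
      using p(3) x_xs False by auto
    then have last_above: "last xs \<in> above i"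
      using assms(3) bag_subset_above[OF assms(2)] xs_sep by blast
    have "y \<in> above i" if "y \<in> set xs" for y
    proof -
      have "conn (V - adhesion i) E (last xs) y"
        using graph_conn_sym[OF graph gpath_conn_last[OF xs_path that]] .
      then show ?thesis
        by (rule conn_closed[OF _ last_above]) (auto intro: above_closed graph_sym[OF graph])
    qed
    then have "set p \<subseteq> V - X"
      using x(2) False assms(5) above_subset_V x_xs by auto
    then show ?thesis
      using gpath_conn[OF gpath_subset[OF p(1)]] by simp
  qed
qed

lemma liminf_sep_eq: "liminf_sep B R = {v. \<forall>\<^sub>F i in sequentially. v \<in> adhesion i}"
  unfolding liminf_sep_def adhesion_def eventually_sequentially by auto

end

section \<open>Lean tree-decompositions\<close>

locale lean_ray_decomp = ray_decomp +
  assumes finite_bags: "finite_parts N B"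
    and lean: "lean V E N A B"
begin

lemma finite_bag: "finite (B (R k))"
  using finite_bags R_in_N unfolding finite_parts_def by blast

lemma lean_ray_linkage:
  assumes "i \<le> j" "Zs \<subseteq> B (R i)" "Zt \<subseteq> B (R j)" "card Zs = card Zt"
    and no_smaller: "\<forall>k. i \<le> k \<longrightarrow> k < j \<longrightarrow> card Zs \<le> card (adhesion k)"
  shows "\<exists>P. card P = card Zs \<and> (\<forall>p\<in>P. ABpath V E Zs Zt p)
    \<and> (\<forall>p\<in>P. \<forall>q\<in>P. p \<noteq> q \<longrightarrow> set p \<inter> set q = {})"
proof -
  have "\<not> card (B (p ! m) \<inter> B (p ! Suc m)) < card Zs"
    if "tpath N A (R i) (R j) p" "Suc m < length p" for p m
  proof -
    have p: "p = map R [i..<Suc j]"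
      using tpath_unique[OF R_in_N R_in_N that(1) ray_segment_tpath[OF assms(1)]] .
    then have "i + m < j"
      using that(2) by (simp del: upt_Suc)
    moreover from this have "B (p ! m) \<inter> B (p ! Suc m) = adhesion (i + m)"
      using p ray_segment_nth[of i m j] ray_segment_nth[of i "Suc m" j]
      unfolding adhesion_def by (simp del: upt_Suc)
    ultimately show ?thesis
      using no_smaller[rule_format, of "i + m"] by simp
  qed
  moreover have "finite Zs" "finite Zt"
    using assms(2,3) finite_bag finite_subset by blast+
  then have "(\<exists>P. card P = card Zs \<and> (\<forall>p\<in>P. ABpath V E Zs Zt p)
      \<and> (\<forall>p\<in>P. \<forall>q\<in>P. p \<noteq> q \<longrightarrow> set p \<inter> set q = {}))
    \<or> (\<exists>p. tpath N A (R i) (R j) p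
      \<and> (\<exists>m. Suc m < length p \<and> card (B (p ! m) \<inter> B (p ! Suc m)) < card Zs))"
    using lean[unfolded lean_def, rule_format, OF R_in_N[of i] R_in_N[of j], of Zs Zt] assms(2-4) by simp
  ultimately show ?thesis
    by blast
qed

lemma adhesion_card_Int_eq:
  assumes "i < j" "Z \<subseteq> B (R j)" "card Z = card (adhesion i)"
    "X \<inter> adhesion i \<subseteq> Z" "X \<inter> above i = {}"
    and closed: "\<And>u w. u \<in> K \<Longrightarrow> w \<in> V - X \<Longrightarrow> E u w \<Longrightarrow> w \<in> K"
    and min: "\<forall>k\<ge>i. card (adhesion i) \<le> card (adhesion k)"
  shows "card (adhesion i \<inter> K) = card (Z \<inter> K)"
proof -
  have "adhesion i \<subseteq> B (R i)"
    unfolding adhesion_def by blast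
  moreover have "\<forall>k. i \<le> k \<longrightarrow> k < j \<longrightarrow> card (adhesion i) \<le> card (adhesion k)"
    using min by blast
  ultimately obtain P where P: "card P = card (adhesion i)" "\<forall>p\<in>P. ABpath V E (adhesion i) Z p"
      "\<forall>p\<in>P. \<forall>q\<in>P. p \<noteq> q \<longrightarrow> set p \<inter> set q = {}"
    using lean_ray_linkage[OF less_imp_le[OF assms(1)] _ assms(2) assms(3)[symmetric]] by blast
  have ends: "hd p \<in> K \<longleftrightarrow> last p \<in> K" if "p \<in> P" for p
  proof -
    have "ABpath V E (adhesion i) Z p"
      using P(2) that by blast
    from adhesion_path_trivial_or_avoids[OF this assms(1,2,4,5)]
    show ?thesis
    proof
      assume c: "conn (V - X) E (hd p) (last p)"
      have "last p \<in> K" if "hd p \<in> K"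
        by (rule conn_closed[OF c that]) (rule closed)
      moreover have "hd p \<in> K" if "last p \<in> K"
        by (rule conn_closed[OF graph_conn_sym[OF graph c] that]) (rule closed)
      ultimately show ?thesis
        by blast
    qed simp
  qed
  have "finite (adhesion i)" "finite Z"
    using finite_bag assms(2) finite_subset unfolding adhesion_def by blast+
  then show ?thesis
    using linkage_card_Int_eq[OF _ _ assms(3)[symmetric] P] ends by blast
qed

text \<open>Two sets \<open>Z\<close> as in \<open>adhesion_card_Int_eq\<close>, differing only in \<open>b1 \<in> K\<close> versus \<open>b2 \<notin> K\<close>,
  cannot both meet \<open>K\<close> in \<open>card (adhesion i \<inter> K)\<close> vertices.\<close>

lemma bag_not_split:
  assumes "i < j" "X \<inter> adhesion i \<subseteq> B (R j)" "X \<inter> above i = {}" "\<not> adhesion i \<subseteq> X"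
    and closed: "\<And>u w. u \<in> K \<Longrightarrow> w \<in> V - X \<Longrightarrow> E u w \<Longrightarrow> w \<in> K"
    and min: "\<forall>k\<ge>i. card (adhesion i) \<le> card (adhesion k)"
    and large: "card (adhesion i) < card (B (R j))"
    and b1: "b1 \<in> B (R j)" "b1 \<in> K" "b1 \<notin> X"
    and b2: "b2 \<in> B (R j)" "b2 \<notin> X" "b2 \<notin> K"
  shows False
proof -
  define F where "F = X \<inter> adhesion i"
  have "finite (adhesion i)"
    using finite_bag unfolding adhesion_def by blast
  moreover have "F \<subset> adhesion i"
    using assms(4) unfolding F_def by blast
  ultimately have F: "finite F" "card F < card (adhesion i)"
    using finite_subset psubset_card_mono by blast+
  have F_bag: "F \<subseteq> B (R j)"
    using assms(2) unfolding F_def by blast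
  have b12: "b1 \<notin> F" "b2 \<notin> F" "b1 \<noteq> b2"
    using b1 b2 unfolding F_def by auto
  have "card (B (R j) - (F \<union> {b1, b2})) = card (B (R j)) - (card F + 2)"
    using card_Diff_subset[of "F \<union> {b1, b2}" "B (R j)"] F(1) F_bag b1(1) b2(1) b12 by simp
  then have "card (adhesion i) - 1 - card F \<le> card (B (R j) - (F \<union> {b1, b2}))"
    using large F(2) by linarith
  then obtain W where W: "W \<subseteq> B (R j) - (F \<union> {b1, b2})" "card W = card (adhesion i) - 1 - card F"
    by (rule obtain_subset_with_card_n)
  have W_fin: "finite W"
    using W(1) finite_bag finite_subset by blast
  have card_FW: "card (F \<union> W) = card (adhesion i) - 1"
    using card_Un_disjoint[OF F(1) W_fin] W F(2) by auto
  have count: "card (adhesion i \<inter> K) = card (insert b (F \<union> W) \<inter> K)"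
    if "b \<in> B (R j)" "b \<notin> F \<union> W" for b
  proof (rule adhesion_card_Int_eq[OF assms(1) _ _ _ assms(3) closed min])
    show "insert b (F \<union> W) \<subseteq> B (R j)"
      using that(1) F_bag W(1) by blast
    show "card (insert b (F \<union> W)) = card (adhesion i)"
      using that(2) card_FW F(1,2) W_fin by simp
    show "X \<inter> adhesion i \<subseteq> insert b (F \<union> W)"
      unfolding F_def by blast
  qed
  have "b1 \<notin> F \<union> W" "b2 \<notin> F \<union> W"
    using b12 W(1) by auto
  then have "card (insert b1 (F \<union> W) \<inter> K) = card (insert b2 (F \<union> W) \<inter> K)"
    using count b1(1) b2(1) by metis
  moreover have "insert b1 (F \<union> W) \<inter> K = insert b1 ((F \<union> W) \<inter> K)"
    "insert b2 (F \<union> W) \<inter> K = (F \<union> W) \<inter> K"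
    using b1(2) b2(3) by auto
  ultimately show False
    using F(1) W_fin \<open>b1 \<notin> F \<union> W\<close> by simp
qed

lemma eventually_ray_in_above:
  assumes "is_end V E \<epsilon>" "arises_from V E N A B r \<epsilon> R" "S \<in> \<epsilon>"
  shows "\<forall>\<^sub>F k in sequentially. S k \<in> above j"
proof -
  have "\<forall>\<^sub>F k in sequentially. S k \<notin> B (R j)"
    using ray_eventually_notin[OF end_ray[OF assms(1,3)] finite_bag] .
  then obtain n where n: "\<forall>k\<ge>n. S k \<notin> B (R j)"
    unfolding eventually_sequentially by blast
  have "S k \<in> endcomp V E (B (R j)) \<epsilon>" if "n \<le> k" for k
    by (rule ray_tail_in_endcomp[OF graph assms(1,3) finite_bag bag_subset_V[OF R_in_N]])
      (use n that in auto)
  then show ?thesis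
    using arises_from_endcomp_above[OF assms(2)] unfolding eventually_sequentially by blast
qed

lemma eventually_ray_meets_adhesion:
  assumes "is_end V E \<epsilon>" "arises_from V E N A B r \<epsilon> R" "S \<in> \<epsilon>"
  shows "\<forall>\<^sub>F j in sequentially. \<exists>a\<ge>n. S a \<in> adhesion j"
proof -
  have S: "ray V E S"
    using end_ray assms(1,3) by blast
  have meets: "\<exists>a\<ge>n. S a \<in> adhesion j" if out: "S n \<notin> above j" for j
  proof -
    obtain m where "\<forall>k\<ge>m. S k \<in> above j"
      using eventually_ray_in_above[OF assms, of j] unfolding eventually_sequentially by blast
    then obtain a where a: "n \<le> a" "S a \<notin> above j" "S (Suc a) \<in> above j"
      using ex_crossing_step[of n "max m n" "\<lambda>k. S k \<in> above j"] out by auto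
    moreover have "E (S (Suc a)) (S a)"
      using S graph_sym[OF graph] unfolding ray_def by blast
    ultimately show ?thesis
      using above_closed by blast
  qed
  have "S n \<in> V"
    using S unfolding ray_def by blast
  then show ?thesis
    by (rule eventually_mono[OF eventually_notin_above meets])
qed

lemma eventually_adhesion_meets_tail:
  assumes "is_end V E \<epsilon>" "arises_from V E N A B r \<epsilon> R" "S \<in> \<epsilon>" "\<forall>a\<ge>n. S a \<in> T"
  shows "\<forall>\<^sub>F j in sequentially. adhesion j \<inter> T \<noteq> {}"
  using eventually_ray_meets_adhesion[OF assms(1-3), of n]
  by (rule eventually_mono) (use assms(4) in blast)

lemma frequently_large_bag:
  assumes "is_end V E \<epsilon>" "arises_from V E N A B r \<epsilon> R"
    and min: "\<forall>k\<ge>i. m \<le> card (adhesion k)"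
  shows "\<exists>\<^sub>F j in sequentially. m < card (B (R j))"
proof (rule ccontr)
  assume "\<not> ?thesis"
  then have small: "\<forall>\<^sub>F j in sequentially. card (B (R j)) \<le> m"
    by (simp add: not_frequently not_less)
  have "\<forall>\<^sub>F j in sequentially. B (R (Suc j)) = B (R j)"
    using small eventually_sequentially_Suc[THEN iffD2, OF small] eventually_ge_at_top[of i]
  proof eventually_elim
    case (elim j)
    have "adhesion j \<subseteq> B (R j)" "adhesion j \<subseteq> B (R (Suc j))"
      unfolding adhesion_def by blast+
    moreover have "card (B (R j)) \<le> card (adhesion j)" "card (B (R (Suc j))) \<le> card (adhesion j)"
      using elim min by (meson order_trans)+
    ultimately show ?case
      using card_seteq[OF finite_bag] by metis
  qed
  then obtain J where J: "\<And>j. J \<le> j \<Longrightarrow> B (R (Suc j)) = B (R j)"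
    unfolding eventually_sequentially by blast
  have const: "B (R j) = B (R J)" if "J \<le> j" for j
    using that by (induction rule: dec_induct) (use J in auto)
  obtain S where S: "S \<in> \<epsilon>"
    using end_nonempty[OF assms(1)] by blast
  obtain n where n: "\<forall>a\<ge>n. S a \<notin> B (R J)"
    using ray_eventually_notin[OF end_ray[OF assms(1) S] finite_bag]
    unfolding eventually_sequentially by blast
  have "\<forall>\<^sub>F j in sequentially. J \<le> j \<and> (\<exists>a\<ge>n. S a \<in> adhesion j)"
    using eventually_ray_meets_adhesion[OF assms(1,2) S] by (intro eventually_conj) simp_all
  then obtain j where "J \<le> j" "\<exists>a\<ge>n. S a \<in> adhesion j"
    using eventually_happens'[OF sequentially_bot] by blast
  then show False
    using n const[of j] unfolding adhesion_def by blast
qed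

lemma no_closed_set_splits_adhesions:
  assumes "is_end V E \<epsilon>" "arises_from V E N A B r \<epsilon> R"
    and X: "finite X" "X \<subseteq> V" and "K \<inter> X = {}"
    and closed: "\<And>u w. u \<in> K \<Longrightarrow> w \<in> V - X \<Longrightarrow> E u w \<Longrightarrow> w \<in> K"
    and inside: "\<forall>\<^sub>F j in sequentially. adhesion j \<inter> K \<noteq> {}"
    and outside: "\<forall>\<^sub>F j in sequentially. adhesion j - (X \<union> K) \<noteq> {}"
  shows False
proof -
  have not_in_X: "\<forall>\<^sub>F j in sequentially. \<not> adhesion j \<subseteq> X"
    using inside by (rule eventually_mono) (use assms(5) in blast)
  obtain i where i: "X \<inter> above i = {}" "\<forall>k\<ge>i. card (adhesion i) \<le> card (adhesion k)"
    "\<forall>j\<ge>i. X \<inter> adhesion i \<subseteq> B (R j)" "\<not> adhesion i \<subseteq> X"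
    using ex_min_adhesion[OF X not_in_X] by blast
  have "\<exists>\<^sub>F j in sequentially. card (adhesion i) < card (B (R j))"
    using frequently_large_bag[OF assms(1,2) i(2)] .
  moreover have "\<forall>\<^sub>F j in sequentially. i < j \<and> adhesion j \<inter> K \<noteq> {} \<and> adhesion j - (X \<union> K) \<noteq> {}"
    using inside outside by (intro eventually_conj eventually_gt_at_top)
  ultimately have "\<exists>\<^sub>F j in sequentially. (i < j \<and> adhesion j \<inter> K \<noteq> {} \<and> adhesion j - (X \<union> K) \<noteq> {})
      \<and> card (adhesion i) < card (B (R j))"
    by (rule frequently_eventually_conj)
  then have "\<exists>j. (i < j \<and> adhesion j \<inter> K \<noteq> {} \<and> adhesion j - (X \<union> K) \<noteq> {})
      \<and> card (adhesion i) < card (B (R j))"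
    by (rule frequently_ex)
  then obtain j b1 b2 where j: "i < j" "card (adhesion i) < card (B (R j))"
    and b1: "b1 \<in> adhesion j" "b1 \<in> K" and b2: "b2 \<in> adhesion j" "b2 \<notin> X" "b2 \<notin> K"
    by blast
  show False
  proof (rule bag_not_split[OF j(1) _ i(1,4) closed i(2) j(2)])
    show "X \<inter> adhesion i \<subseteq> B (R j)"
      using i(3) j(1) by simp
    show "b1 \<in> B (R j)" "b2 \<in> B (R j)"
      using b1(1) b2(1) unfolding adhesion_def by blast+
  qed (use b1(2) b2(2,3) assms(5) in blast)+
qed

lemma arising_ray_reaches_component:
  assumes "is_end V E \<epsilon>" "arises_from V E N A B r \<epsilon> R" "S \<in> \<epsilon>"
    and X: "finite X" "X \<subseteq> V" and tail: "\<forall>k\<ge>n. S k \<notin> X"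
    and inside: "\<forall>\<^sub>F j in sequentially. adhesion j \<inter> {u. conn (V - X) E x u} \<noteq> {}"
  shows "\<exists>a\<ge>n. conn (V - X) E x (S a)"
proof (rule ccontr)
  assume far: "\<not> ?thesis"
  define K where "K = {u. conn (V - X) E x u}"
  have "K \<inter> X = {}"
    using component_subset[of "V - X" E x] unfolding K_def by blast
  have closed: "\<And>u w. u \<in> K \<Longrightarrow> w \<in> V - X \<Longrightarrow> E u w \<Longrightarrow> w \<in> K"
    unfolding K_def by (rule component_closed)
  have "\<forall>a\<ge>n. S a \<in> - (X \<union> K)"
    using tail far unfolding K_def by auto
  then have outside: "\<forall>\<^sub>F j in sequentially. adhesion j - (X \<union> K) \<noteq> {}"
    unfolding Diff_eq by (rule eventually_adhesion_meets_tail[OF assms(1-3)])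
  show False
    by (rule no_closed_set_splits_adhesions[OF assms(1,2) X \<open>K \<inter> X = {}\<close> _ inside[folded K_def] outside])
      (rule closed)
qed

lemma arising_end_unique:
  assumes "is_end V E \<epsilon>1" "arises_from V E N A B r \<epsilon>1 R"
    and "is_end V E \<epsilon>2" "arises_from V E N A B r \<epsilon>2 R"
  shows "\<epsilon>1 = \<epsilon>2"
proof -
  obtain S1 S2 where S: "S1 \<in> \<epsilon>1" "S2 \<in> \<epsilon>2"
    using end_nonempty assms(1,3) by blast
  have rays: "ray V E S1" "ray V E S2"
    using end_ray assms(1,3) S by blast+
  have "ray_equiv V E S1 S2"
    unfolding ray_equiv_def
  proof (intro allI impI)
    fix X
    assume X: "finite X \<and> X \<subseteq> V"
    obtain n1 where n1: "\<forall>k\<ge>n1. S1 k \<notin> X"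
      using ray_eventually_notin[OF rays(1)] X unfolding eventually_sequentially by blast
    obtain n2 where n2: "\<forall>k\<ge>n2. S2 k \<notin> X"
      using ray_eventually_notin[OF rays(2)] X unfolding eventually_sequentially by blast
    have "\<forall>a\<ge>n1. S1 a \<in> {u. conn (V - X) E (S1 n1) u}"
      by (simp add: ray_conn[OF graph rays(1) n1])
    then have "\<forall>\<^sub>F j in sequentially. adhesion j \<inter> {u. conn (V - X) E (S1 n1) u} \<noteq> {}"
      by (rule eventually_adhesion_meets_tail[OF assms(1,2) S(1)])
    then obtain a where "n2 \<le> a" "conn (V - X) E (S1 n1) (S2 a)"
      using arising_ray_reaches_component[OF assms(3,4) S(2) _ _ n2] X by blast
    then show "\<exists>n m. (\<forall>k\<ge>n. S1 k \<notin> X) \<and> (\<forall>k\<ge>m. S2 k \<notin> X) \<and> conn (V - X) E (S1 n) (S2 m)"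
      using n1 n2 by (intro exI[of _ n1] exI[of _ a]) auto
  qed
  then show ?thesis
    using end_eqI[OF graph assms(1,3) S] by blast
qed

lemma eventually_in_adhesion_Dom:
  assumes "is_end V E \<epsilon>" "arises_from V E N A B r \<epsilon> R"
    and late: "\<forall>\<^sub>F i in sequentially. v \<in> adhesion i"
  shows "v \<in> Dom V E \<epsilon>"
  unfolding Dom_def
proof (intro CollectI allI impI)
  fix X
  assume X: "finite X \<and> X \<subseteq> V - {v}"
  obtain i where "v \<in> adhesion i"
    using eventually_happens'[OF sequentially_bot late] by blast
  then have v: "v \<in> V - X"
    using X bag_subset_V[OF R_in_N] unfolding adhesion_def by blast
  have inside: "\<forall>\<^sub>F j in sequentially. adhesion j \<inter> {u. conn (V - X) E v u} \<noteq> {}"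
    using late by (rule eventually_mono) (use conn_refl[OF v] in blast)
  have "\<exists>n. (\<forall>k\<ge>n. S k \<notin> X) \<and> conn (V - X) E (S n) v" if S: "S \<in> \<epsilon>" for S
  proof -
    obtain n where n: "\<forall>k\<ge>n. S k \<notin> X"
      using ray_eventually_notin[OF end_ray[OF assms(1) S]] X unfolding eventually_sequentially by blast
    then obtain a where "n \<le> a" "conn (V - X) E v (S a)"
      using arising_ray_reaches_component[OF assms(1,2) S _ _ n inside] X by blast
    then show ?thesis
      using n graph_conn_sym[OF graph] by (metis order_trans)
  qed
  then show "v \<in> endcomp V E X \<epsilon>"
    using v unfolding endcomp_def by blast
qed

lemma Dom_eventually_in_adhesion:
  assumes "arises_from V E N A B r \<epsilon> R" "v \<in> Dom V E \<epsilon>"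
  shows "\<forall>\<^sub>F i in sequentially. v \<in> adhesion i"
proof -
  have dom: "v \<in> endcomp V E X \<epsilon>" if "finite X" "X \<subseteq> V - {v}" for X
    using assms(2) that unfolding Dom_def by blast
  then have "v \<in> V"
    unfolding endcomp_def by blast
  obtain k where k: "v \<notin> above k" "v \<in> B (R k) \<longrightarrow> (\<forall>j\<ge>k. v \<in> B (R j))"
    using eventually_happens'[OF sequentially_bot
        eventually_conj[OF eventually_notin_above[OF \<open>v \<in> V\<close>] eventually_bag_persistent]]
    by blast
  have "v \<in> B (R k)"
  proof (rule ccontr)
    assume "v \<notin> B (R k)"
    then have "B (R k) \<subseteq> V - {v}"
      using bag_subset_V[OF R_in_N] by blast
    then have "v \<in> endcomp V E (B (R k)) \<epsilon>"
      by (rule dom[OF finite_bag])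
    then show False
      using arises_from_endcomp_above[OF assms(1)] k(1) by blast
  qed
  then have "\<forall>j\<ge>k. v \<in> adhesion j"
    using k(2) unfolding adhesion_def by auto
  then show ?thesis
    unfolding eventually_sequentially by blast
qed

end

theorem lemma3p5:
  fixes V :: "'a set" and E :: "'a \<Rightarrow> 'a \<Rightarrow> bool"
    and N :: "'b set" and A :: "'b \<Rightarrow> 'b \<Rightarrow> bool" and B :: "'b \<Rightarrow> 'a set" and r :: 'b
  assumes "graph V E"
    and "tree_decomp V E N A B"
    and "finite_parts N B"
    and "lean V E N A B"
    and "r \<in> N"
  shows "(\<forall>R \<epsilon>1 \<epsilon>2. rooted_ray N A r R \<and> is_end V E \<epsilon>1 \<and> is_end V E \<epsilon>2
            \<and> arises_from V E N A B r \<epsilon>1 R \<and> arises_from V E N A B r \<epsilon>2 R \<longrightarrow> \<epsilon>1 = \<epsilon>2)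
       \<and> (\<forall>R \<epsilon>. rooted_ray N A r R \<and> is_end V E \<epsilon> \<and> arises_from V E N A B r \<epsilon> R
            \<longrightarrow> liminf_sep B R = Dom V E \<epsilon>)"
proof (intro conjI allI impI)
  fix R \<epsilon>1 \<epsilon>2
  assume h: "rooted_ray N A r R \<and> is_end V E \<epsilon>1 \<and> is_end V E \<epsilon>2
    \<and> arises_from V E N A B r \<epsilon>1 R \<and> arises_from V E N A B r \<epsilon>2 R"
  interpret lean_ray_decomp V E N A B r R
    using assms h by unfold_locales simp_all
  show "\<epsilon>1 = \<epsilon>2"
    using arising_end_unique h by blast
next
  fix R \<epsilon>
  assume h: "rooted_ray N A r R \<and> is_end V E \<epsilon> \<and> arises_from V E N A B r \<epsilon> R"
  interpret lean_ray_decomp V E N A B r R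
    using assms h by unfold_locales simp_all
  show "liminf_sep B R = Dom V E \<epsilon>"
    unfolding liminf_sep_eq
    using h eventually_in_adhesion_Dom Dom_eventually_in_adhesion by blast
qed

end
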